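(* Let $N=1000$, $p_0=1/1000$, $T>0$, let $u\in C([0,T]:H^N(\mathbb{R}^3))$ solve $i\partial_t u-\Lambda u=-(|x|^{-1}\ast|u|^2)u$, let $f(t)=e^{it\Lambda}u(t)$, and assume $$\sup_{t\in[0,T]}\Big[(1+t)^{-p_0}\|u(t)\|_{H^N}+(1+t)^{-p_0}\|xf(t)\|_{H^2}+(1+t)^{-2p_0}\|x^2f(t)\|_{H^2}+\|(1+|\xi|)^{10}\widehat f(t,\xi)\|_{L^\infty_\xi}\Big]\le\varepsilon_1 .$$ For $m\in\{0,1,2,\dots\}$ let $l_0:=\lfloor-29m/40\rfloor+1$ and define, for $s\in[0,T]$, $\xi\in\mathbb{R}^3$, $$I_0(s,\xi):=ic_1\iint_{\mathbb{R}^3\times\mathbb{R}^3}e^{is\phi(\xi,\eta,\sigma)}|\eta|^{-2}\varphi(|\eta|/2^{l_0})\,\widehat f(s,\xi+\eta)\widehat f(s,\xi+\sigma)\overline{\widehat f}(s,\xi+\eta+\sigma)\,d\eta\,d\sigma,$$ with $c_1=2(2\pi)^{-5}$ and $\phi(\xi,\eta,\sigma)=-\Lambda(\xi)+\Lambda(\xi+\eta)+\Lambda(\xi+\sigma)-\Lambda(\xi+\eta+\sigma)$. Then for all $m\in\{0,1,\dots\}$, $k\in\mathbb{Z}\cap[m/300,\infty)$, $s\in[2^m-1,2^m]\cap[0,T]$ and $|\xi|\in[2^k,2^{k+1}]$, $$|I_0(s,\xi)|\lesssim\varepsilon_1^3\,2^{-3m/2}\,2^{-10k}.$$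
   Context: $\Lambda=\sqrt{1-\Delta}$ is the Fourier multiplier with symbol $\Lambda(\xi)=\sqrt{1+|\xi|^2}$ on $\mathbb{R}^3$; $\widehat g(\xi)=\int e^{-ix\cdot\xi}g(x)\,dx$. $\varphi:\mathbb{R}\to[0,1]$ is a fixed even smooth function supported in $[-8/5,8/5]$ and equal to $1$ on $[-5/4,5/4]$. Implicit constants are independent of $m,k,s,\xi,T,\varepsilon_1$. *)

theory Defs
  imports "HOL-Analysis.Analysis" "HOL-Probability.Essential_Supremum"
begin

type_synonym R3 = "real^3"

definition Lam_sym :: "R3 \<Rightarrow> real" where
  "Lam_sym \<xi> = sqrt (1 + (norm \<xi>)^2)"

definition ft :: "(R3 \<Rightarrow> complex) \<Rightarrow> R3 \<Rightarrow> complex" where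
  "ft g \<xi> = (LINT x|lborel. cis (- (x \<bullet> \<xi>)) * g x)"

definition square_integrable :: "(R3 \<Rightarrow> complex) \<Rightarrow> bool" where
  "square_integrable g \<longleftrightarrow> g \<in> borel_measurable lborel \<and> integrable lborel (\<lambda>x. (cmod (g x))^2)"

definition L2fourier :: "(R3 \<Rightarrow> complex) \<Rightarrow> (R3 \<Rightarrow> complex) \<Rightarrow> bool" where
  "L2fourier g h \<longleftrightarrow> square_integrable g \<and> h \<in> borel_measurable lborel \<and>
     ((\<lambda>R. \<integral>\<^sup>+ \<xi>. ennreal ((cmod (ft (\<lambda>x. indicator (cball 0 R) x * g x) \<xi> - h \<xi>))^2) \<partial>lborel)
        \<longlongrightarrow> 0) at_top"

text \<open>A representative of the L^2 Fourier transform (determined up to null sets).\<close>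
definition hat :: "(R3 \<Rightarrow> complex) \<Rightarrow> R3 \<Rightarrow> complex" where
  "hat g = (SOME h. L2fourier g h)"

definition in_H :: "nat \<Rightarrow> (R3 \<Rightarrow> complex) \<Rightarrow> bool" where
  "in_H n g \<longleftrightarrow> square_integrable g \<and> (\<exists>h. L2fourier g h) \<and>
     integrable lborel (\<lambda>\<xi>. (1 + (norm \<xi>)^2)^n * (cmod (hat g \<xi>))^2)"

text \<open>Sobolev norm ||g||_{H^n} = ||Lambda^n g||_{L^2} (Plancherel with the given FT convention).\<close>
definition Hnorm :: "nat \<Rightarrow> (R3 \<Rightarrow> complex) \<Rightarrow> real" where
  "Hnorm n g = sqrt ((2*pi) powr (-3) *
     (LINT \<xi>|lborel. (1 + (norm \<xi>)^2)^n * (cmod (hat g \<xi>))^2))"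

definition Hnorm_vec :: "nat \<Rightarrow> 'i set \<Rightarrow> ('i \<Rightarrow> R3 \<Rightarrow> complex) \<Rightarrow> real" where
  "Hnorm_vec n I gs = sqrt (\<Sum>i\<in>I. (Hnorm n (gs i))^2)"

fun smoothk :: "nat \<Rightarrow> (R3 \<Rightarrow> complex) \<Rightarrow> bool" where
  "smoothk 0 g = continuous_on UNIV g"
| "smoothk (Suc k) g = ((\<forall>x. g differentiable (at x)) \<and>
     (\<forall>i. smoothk k (\<lambda>x. frechet_derivative g (at x) (axis i 1))))"

definition test_fun :: "(R3 \<Rightarrow> complex) \<Rightarrow> bool" where
  "test_fun b \<longleftrightarrow> (\<forall>k. smoothk k b) \<and> (\<exists>R. \<forall>x. norm x > R \<longrightarrow> b x = 0)"

definition Lam_op :: "(R3 \<Rightarrow> complex) \<Rightarrow> R3 \<Rightarrow> complex" where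
  "Lam_op b x = (2*pi) powr (-3) * (LINT \<xi>|lborel. cis (x \<bullet> \<xi>) * Lam_sym \<xi> * ft b \<xi>)"

definition pairing :: "(R3 \<Rightarrow> complex) \<Rightarrow> (R3 \<Rightarrow> complex) \<Rightarrow> complex" where
  "pairing g b = (LINT x|lborel. g x * b x)"

definition hartree :: "(R3 \<Rightarrow> complex) \<Rightarrow> R3 \<Rightarrow> complex" where
  "hartree g x = complex_of_real (LINT y|lborel. (cmod (g y))^2 / norm (x - y))"

text \<open>u solves i u_t - Lambda u = -(|x|^{-1} * |u|^2) u on [0,T], in the weak-in-space sense.\<close>
definition solves_hartree :: "real \<Rightarrow> (real \<Rightarrow> R3 \<Rightarrow> complex) \<Rightarrow> bool" where
  "solves_hartree T u \<longleftrightarrow> (\<forall>b. test_fun b \<longrightarrow> (\<forall>t\<in>{0..T}.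
     ((\<lambda>s. pairing (u s) b) has_vector_derivative
        (- \<i> * (pairing (u t) (Lam_op b) - pairing (\<lambda>x. hartree (u t) x * u t x) b)))
     (at t within {0..T})))"

definition cont_H :: "nat \<Rightarrow> real \<Rightarrow> (real \<Rightarrow> R3 \<Rightarrow> complex) \<Rightarrow> bool" where
  "cont_H n T u \<longleftrightarrow> (\<forall>t\<in>{0..T}. in_H n (u t)) \<and>
     (\<forall>t0\<in>{0..T}. ((\<lambda>t. Hnorm n (\<lambda>x. u t x - u t0 x)) \<longlongrightarrow> 0) (at t0 within {0..T}))"

definition phase :: "R3 \<Rightarrow> R3 \<Rightarrow> R3 \<Rightarrow> real" where
  "phase \<xi> \<eta> \<sigma> = - Lam_sym \<xi> + Lam_sym (\<xi> + \<eta>) + Lam_sym (\<xi> + \<sigma>) - Lam_sym (\<xi> + \<eta> + \<sigma>)"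

definition I0 :: "(real \<Rightarrow> real) \<Rightarrow> (R3 \<Rightarrow> complex) \<Rightarrow> int \<Rightarrow> real \<Rightarrow> R3 \<Rightarrow> complex" where
  "I0 \<phi> F l0 s \<xi> = \<i> * complex_of_real (2 * (2*pi) powr (-5)) *
     (LINT z|(lborel :: (R3 \<times> R3) measure).
        cis (s * phase \<xi> (fst z) (snd z)) *
        complex_of_real ((norm (fst z)) powr (-2) * \<phi> (norm (fst z) / 2 powr l0)) *
        F (\<xi> + fst z) * F (\<xi> + snd z) * cnj (F (\<xi> + fst z + snd z)))"

definition smooth_real :: "(real \<Rightarrow> real) \<Rightarrow> bool" where
  "smooth_real \<phi> \<longleftrightarrow> (\<forall>n x. ((deriv ^^ n) \<phi>) differentiable (at x))"

end

theory Submission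
  imports Defs
begin

(*
  Integrating first in sigma, the AM-GM
  inequality 2ab <= a^2 + b^2 and translation invariance bound the sigma-integral by the squared
  L^2 norm of F = hat f(s), so |I0| <~ ||F||^2 * Y with Y = int |eta|^-2 phi(|eta|/2^l0) |F(xi + eta)|.
  Split Y at the radii tau1 = 2^(-19m/10) < tau2 = 2^(-7m/5) < rho ~ 2^(-29m/40), the support of
  the cutoff.  On |eta| <= tau1 the weighted L^infinity bound gives |F(xi + eta)| <~ eps1 2^(-10k)
  and the singular weight integrates to O(tau1).  On the two outer shells |eta|^-2 is at most
  tau1^-2 resp. tau2^-2, and the integral of |F| over a small ball around xi is controlled, by AM-GM
  with an optimised weight, by the volume of the ball and the H^N bound; localised near xi the latter
  decays like (1 + |xi|)^-N = 2^(-Nk), which beats every power of 2^m because k >= m/300.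
*)

section \<open>Translation invariance and the L2 Fourier transform\<close>

lemma nn_integral_lborel_translate:
  fixes c :: "'a::euclidean_space"
  assumes [measurable]: "h \<in> borel_measurable lborel"
  shows "(\<integral>\<^sup>+x. h (c + x) \<partial>lborel) = (\<integral>\<^sup>+x. h x \<partial>lborel)"
proof -
  have "(\<integral>\<^sup>+x. h x \<partial>lborel) = (\<integral>\<^sup>+x. h x \<partial>distr lborel borel ((+) c))"
    by (simp add: lborel_distr_plus)
  also have "\<dots> = (\<integral>\<^sup>+x. h (c + x) \<partial>lborel)"
    by (subst nn_integral_distr) auto
  finally show ?thesis by simp
qed

lemma AE_lborel_translate:
  fixes c :: "'a::euclidean_space"
  assumes [measurable]: "Measurable.pred lborel P" and "AE x in lborel. P x"
  shows "AE x in lborel. P (c + x)"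
proof -
  have "AE x in distr lborel borel ((+) c). P x"
    by (subst lborel_distr_plus) (rule assms(2))
  then show ?thesis by (subst (asm) AE_distr_iff) auto
qed

lemma norm_diff_power2_le:
  fixes a b c :: "'a::real_normed_vector"
  shows "(norm (a - b))^2 \<le> 2 * (norm (c - a))^2 + 2 * (norm (c - b))^2"
proof -
  have "norm (a - b) \<le> norm (c - a) + norm (c - b)"
    using norm_triangle_ineq4[of "c - b" "c - a"] by simp
  then have "(norm (a - b))^2 \<le> (norm (c - a) + norm (c - b))^2"
    by (simp add: power_mono)
  also have "\<dots> \<le> 2 * (norm (c - a))^2 + 2 * (norm (c - b))^2"
    using sum_squares_bound[of "norm (c - a)" "norm (c - b)"] by (simp add: power2_sum)
  finally show ?thesis .
qed

lemma ft_truncation_measurable: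
  assumes [measurable]: "g \<in> borel_measurable lborel"
  shows "ft (\<lambda>x. indicator (cball 0 R) x * g x) \<in> borel_measurable lborel"
proof -
  have "continuous_on UNIV (\<lambda>x::R3 \<times> R3. cis (- (snd x \<bullet> fst x)))"
    by (intro continuous_intros)
  then have [measurable]: "(\<lambda>x::R3 \<times> R3. cis (- (snd x \<bullet> fst x))) \<in> borel_measurable (borel \<Otimes>\<^sub>M borel)"
    by (simp add: borel_prod borel_measurable_continuous_onI)
  have "(\<lambda>y. indicator (cball 0 R) y * g y) \<in> borel_measurable lborel"
    by (intro borel_measurable_times borel_measurable_indicator assms) auto
  then have [measurable]:
      "(\<lambda>x::R3 \<times> R3. indicator (cball 0 R) (snd x) * g (snd x)) \<in> borel_measurable (lborel \<Otimes>\<^sub>M lborel)"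
    by (rule measurable_compose[OF measurable_snd])
  show ?thesis
    unfolding ft_def by (rule lborel.borel_measurable_lebesgue_integral) measurable
qed

lemma L2fourier_unique_AE:
  assumes "L2fourier g h1" "L2fourier g h2"
  shows "AE \<xi> in lborel. h1 \<xi> = h2 \<xi>"
proof -
  define G where "G R = ft (\<lambda>x. indicator (cball 0 R) x * g x)" for R
  define d where "d h = (\<lambda>R. \<integral>\<^sup>+\<xi>. ennreal ((cmod (G R \<xi> - h \<xi>))^2) \<partial>lborel)" for h
  have [measurable]: "h1 \<in> borel_measurable lborel" "h2 \<in> borel_measurable lborel"
    using assms by (auto simp: L2fourier_def)
  have [measurable]: "G R \<in> borel_measurable lborel" for R
    unfolding G_def using assms
    by (intro ft_truncation_measurable) (auto simp: L2fourier_def square_integrable_def)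
  have "(d h1 \<longlongrightarrow> 0) at_top" "(d h2 \<longlongrightarrow> 0) at_top"
    using assms by (auto simp: L2fourier_def G_def d_def)
  then have lim: "((\<lambda>R. 2 * d h1 R + 2 * d h2 R) \<longlongrightarrow> 2 * 0 + 2 * 0) at_top"
    by (intro tendsto_intros) auto
  have "(\<integral>\<^sup>+\<xi>. ennreal ((cmod (h1 \<xi> - h2 \<xi>))^2) \<partial>lborel) \<le> 2 * d h1 R + 2 * d h2 R" for R
  proof -
    have "(\<integral>\<^sup>+\<xi>. ennreal ((cmod (h1 \<xi> - h2 \<xi>))^2) \<partial>lborel)
        \<le> (\<integral>\<^sup>+\<xi>. 2 * ennreal ((cmod (G R \<xi> - h1 \<xi>))^2) + 2 * ennreal ((cmod (G R \<xi> - h2 \<xi>))^2) \<partial>lborel)"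
    proof (rule nn_integral_mono)
      fix \<xi>
      have "ennreal ((cmod (h1 \<xi> - h2 \<xi>))^2)
          \<le> ennreal (2 * (cmod (G R \<xi> - h1 \<xi>))^2 + 2 * (cmod (G R \<xi> - h2 \<xi>))^2)"
        by (rule ennreal_leI[OF norm_diff_power2_le])
      then show "ennreal ((cmod (h1 \<xi> - h2 \<xi>))^2)
          \<le> 2 * ennreal ((cmod (G R \<xi> - h1 \<xi>))^2) + 2 * ennreal ((cmod (G R \<xi> - h2 \<xi>))^2)"
        by (simp add: ennreal_mult)
    qed
    also have "\<dots> = 2 * d h1 R + 2 * d h2 R"
      by (simp add: d_def nn_integral_add nn_integral_cmult)
    finally show ?thesis .
  qed
  then have "(\<integral>\<^sup>+\<xi>. ennreal ((cmod (h1 \<xi> - h2 \<xi>))^2) \<partial>lborel) = 0"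
    using tendsto_lowerbound[OF lim] by (simp add: always_eventually)
  then have "AE \<xi> in lborel. ennreal ((cmod (h1 \<xi> - h2 \<xi>))^2) = 0"
    by (subst (asm) nn_integral_0_iff_AE) auto
  then show ?thesis by eventually_elim simp
qed

lemma L2fourier_hat:
  assumes "L2fourier g h"
  shows "L2fourier g (hat g)"
  unfolding hat_def by (rule someI[of "L2fourier g", OF assms])

section \<open>The singular weight\<close>

lemma emeasure_cball_le:
  "emeasure lborel (cball (c::R3) r) \<le> ennreal (8 * r^3)"
proof (cases "0 \<le> r")
  case True
  have "4/3 * pi * r^3 \<le> 8 * r^3"
    using True pi_less_4 by (intro mult_right_mono) auto
  with True show ?thesis
    by (subst emeasure_cball) (simp_all add: unit_ball_vol_3 ennreal_leI)
qed simp

lemma ennreal_term_le_suminf: "(f n :: ennreal) \<le> (\<Sum>n. f n)"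
  using sum_le_suminf[of f "{n}"] by simp

lemma dyadic_shell_exists:
  fixes t \<tau> :: real
  assumes "0 < t" "t \<le> \<tau>"
  obtains n :: nat where "\<tau> / 2 ^ Suc n < t" "t \<le> \<tau> / 2 ^ n"
proof -
  define P where "P n \<longleftrightarrow> \<tau> / 2 ^ n < t" for n :: nat
  obtain n where "(1/2::real) ^ n < t / \<tau>"
    using real_arch_pow_inv[of "t / \<tau>" "1/2"] assms by auto
  then have "P n"
    using assms by (simp add: P_def field_simps)
  moreover have "\<not> P 0"
    using assms by (simp add: P_def)
  ultimately obtain n where "\<not> P n" "P (Suc n)"
    using exists_least_lemma[of P] by blast
  then show thesis
    using that by (simp add: P_def not_less)
qed

lemma norm_powr_minus_two_le_dyadic_sum:
  fixes \<eta> :: R3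
  assumes "0 < \<tau>"
  shows "ennreal (norm \<eta> powr (-2) * indicator (cball 0 \<tau>) \<eta>)
    \<le> (\<Sum>n. ennreal (4 / (\<tau> / 2 ^ n)^2) * indicator (cball 0 (\<tau> / 2 ^ n)) \<eta>)"
proof (cases "\<eta> = 0 \<or> \<tau> < norm \<eta>")
  case False
  then have "0 < norm \<eta>" "norm \<eta> \<le> \<tau>" by auto
  then obtain n where n: "\<tau> / 2 ^ Suc n < norm \<eta>" "norm \<eta> \<le> \<tau> / 2 ^ n"
    by (metis dyadic_shell_exists)
  have "norm \<eta> powr (-2) = 1 / (norm \<eta>)^2"
    using \<open>0 < norm \<eta>\<close> by (simp add: powr_minus powr_realpow divide_inverse)
  also have "\<dots> \<le> 1 / (\<tau> / 2 ^ Suc n)^2"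
    using n assms \<open>0 < norm \<eta>\<close> by (intro divide_left_mono power_mono mult_pos_pos) auto
  also have "\<dots> = 4 / (\<tau> / 2 ^ n)^2"
    by (simp add: power_divide)
  finally have "ennreal (norm \<eta> powr (-2) * indicator (cball 0 \<tau>) \<eta>)
      \<le> ennreal (4 / (\<tau> / 2 ^ n)^2) * indicator (cball 0 (\<tau> / 2 ^ n)) \<eta>"
    using n \<open>norm \<eta> \<le> \<tau>\<close> by (auto intro: ennreal_leI)
  also have "\<dots> \<le> (\<Sum>n. ennreal (4 / (\<tau> / 2 ^ n)^2) * indicator (cball 0 (\<tau> / 2 ^ n)) \<eta>)"
    by (rule ennreal_term_le_suminf)
  finally show ?thesis .
qed auto

lemma nn_integral_norm_powr_minus_two_le:
  assumes "0 < \<tau>"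
  shows "(\<integral>\<^sup>+\<eta>. ennreal (norm (\<eta>::R3) powr (-2) * indicator (cball 0 \<tau>) \<eta>) \<partial>lborel)
    \<le> ennreal (64 * \<tau>)"
proof -
  define r where "r n = \<tau> / 2 ^ n" for n :: nat
  have r: "0 < r n" for n
    using assms by (simp add: r_def)
  have "(\<integral>\<^sup>+\<eta>. ennreal (norm (\<eta>::R3) powr (-2) * indicator (cball 0 \<tau>) \<eta>) \<partial>lborel)
      \<le> (\<integral>\<^sup>+\<eta>. (\<Sum>n. ennreal (4 / (r n)^2) * indicator (cball 0 (r n)) (\<eta>::R3)) \<partial>lborel)"
    unfolding r_def by (intro nn_integral_mono norm_powr_minus_two_le_dyadic_sum assms)
  also have "\<dots> = (\<Sum>n. ennreal (4 / (r n)^2) * emeasure lborel (cball (0::R3) (r n)))"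
    by (subst nn_integral_suminf)
      (auto simp: nn_integral_cmult_indicator intro!: borel_measurable_times_ennreal borel_measurable_indicator)
  also have "\<dots> \<le> (\<Sum>n. ennreal (32 * \<tau> * (1/2)^n))"
  proof (intro suminf_le allI)
    fix n
    have "ennreal (4 / (r n)^2) * emeasure lborel (cball (0::R3) (r n))
        \<le> ennreal (4 / (r n)^2) * ennreal (8 * (r n)^3)"
      by (intro mult_left_mono emeasure_cball_le) auto
    also have "\<dots> = ennreal (4 / (r n)^2 * (8 * (r n)^3))"
      using r[of n] by (intro ennreal_mult[symmetric]) auto
    also have "4 / (r n)^2 * (8 * (r n)^3) = 32 * \<tau> * (1/2)^n"
      using r[of n] by (simp add: r_def power2_eq_square power3_eq_cube power_one_over)
    finally show "ennreal (4 / (r n)^2) * emeasure lborel (cball (0::R3) (r n)) \<le> ennreal (32 * \<tau> * (1/2)^n)" .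
  qed auto
  also have "\<dots> = ennreal (64 * \<tau>)"
  proof -
    have "(\<lambda>n. 32 * \<tau> * (1/2::real)^n) sums (32 * \<tau> * 2)"
      using geometric_sums[of "1/2::real"] by (intro sums_mult) simp
    then show ?thesis
      using assms by (subst suminf_ennreal_eq) auto
  qed
  finally show ?thesis .
qed

section \<open>Reduction to a single integral\<close>

(* |eta|^-2 is, up to a constant, the Fourier transform of the Coulomb potential |x|^-1. *)
definition coulomb_cutoff :: "(real \<Rightarrow> real) \<Rightarrow> int \<Rightarrow> R3 \<Rightarrow> real" where
  "coulomb_cutoff \<phi> l \<eta> = norm \<eta> powr (-2) * \<phi> (norm \<eta> / 2 powr l)"

lemma coulomb_cutoff_measurable [measurable]:
  assumes [measurable]: "\<phi> \<in> borel_measurable borel"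
  shows "coulomb_cutoff \<phi> l \<in> borel_measurable borel"
  unfolding coulomb_cutoff_def by measurable

lemma norm_I0_le:
  assumes "\<And>x. 0 \<le> \<phi> x"
  shows "ennreal (cmod (I0 \<phi> F l s \<xi>)) \<le> ennreal (2 * (2*pi) powr (-5)) *
    (\<integral>\<^sup>+z. ennreal (coulomb_cutoff \<phi> l (fst z) * cmod (F (\<xi> + fst z)) * cmod (F (\<xi> + snd z))
        * cmod (F (\<xi> + fst z + snd z))) \<partial>lborel)"
proof -
  define h where "h z = cis (s * phase \<xi> (fst z) (snd z)) *
      complex_of_real (coulomb_cutoff \<phi> l (fst z)) *
      F (\<xi> + fst z) * F (\<xi> + snd z) * cnj (F (\<xi> + fst z + snd z))" for z :: "R3 \<times> R3"
  have norm_h: "norm (h z) = coulomb_cutoff \<phi> l (fst z) * cmod (F (\<xi> + fst z))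
      * cmod (F (\<xi> + snd z)) * cmod (F (\<xi> + fst z + snd z))" for z
    using assms by (simp add: h_def coulomb_cutoff_def norm_mult abs_mult)
  have "norm (LINT z|lborel. h z) \<le> (\<integral>\<^sup>+z. norm (h z) \<partial>lborel)"
    by (cases "integrable lborel h") (simp_all add: integral_norm_bound_ennreal not_integrable_integral_eq)
  moreover have "cmod (I0 \<phi> F l s \<xi>) = 2 * (2*pi) powr (-5) * norm (LINT z|lborel. h z)"
    unfolding I0_def h_def coulomb_cutoff_def by (simp add: norm_mult)
  ultimately show ?thesis
    by (simp add: norm_h ennreal_mult mult_left_mono)
qed

lemma ennreal_mult_le_half_squares:
  fixes x y :: real
  shows "ennreal (x * y) \<le> (ennreal (x^2) + ennreal (y^2)) / 2"
proof -
  have "ennreal (x * y) \<le> ennreal ((x^2 + y^2) / 2)"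
    using sum_squares_bound[of x y] by (intro ennreal_leI) simp
  also have "\<dots> = (ennreal (x^2) + ennreal (y^2)) / 2"
    by (simp add: ennreal_divide_numeral[symmetric])
  finally show ?thesis .
qed

lemma nn_integral_translates_product_le:
  fixes F :: "'a::euclidean_space \<Rightarrow> 'b::real_normed_vector"
  assumes [measurable]: "F \<in> borel_measurable lborel"
  shows "(\<integral>\<^sup>+\<sigma>. ennreal (norm (F (a + \<sigma>)) * norm (F (b + \<sigma>))) \<partial>lborel)
    \<le> (\<integral>\<^sup>+\<zeta>. ennreal ((norm (F \<zeta>))^2) \<partial>lborel)"
    (is "_ \<le> ?L")
proof -
  have "(\<integral>\<^sup>+\<sigma>. ennreal (norm (F (a + \<sigma>)) * norm (F (b + \<sigma>))) \<partial>lborel)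
      \<le> (\<integral>\<^sup>+\<sigma>. (ennreal ((norm (F (a + \<sigma>)))^2) + ennreal ((norm (F (b + \<sigma>)))^2)) / 2 \<partial>lborel)"
    by (intro nn_integral_mono ennreal_mult_le_half_squares)
  also have "\<dots> = (?L + ?L) / 2"
  proof -
    have sq: "(\<lambda>\<zeta>. ennreal ((norm (F \<zeta>))^2)) \<in> borel_measurable lborel"
      by measurable
    show ?thesis
      using nn_integral_lborel_translate[OF sq, of a] nn_integral_lborel_translate[OF sq, of b]
      by (simp add: nn_integral_divide nn_integral_add del: ennreal_plus)
  qed
  also have "\<dots> = ?L"
    unfolding mult_2_right[symmetric] by (rule ennreal_mult_divide_eq) auto
  finally show ?thesis .
qed

lemma nn_integral_trilinear_le:
  fixes K :: "'a::euclidean_space \<Rightarrow> real" and F :: "'a \<Rightarrow> 'b::real_normed_vector"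
  assumes K: "\<And>\<eta>. 0 \<le> K \<eta>" and [measurable]: "K \<in> borel_measurable lborel" "F \<in> borel_measurable lborel"
  shows "(\<integral>\<^sup>+z. ennreal (K (fst z) * norm (F (\<xi> + fst z)) * norm (F (\<xi> + snd z))
        * norm (F (\<xi> + fst z + snd z))) \<partial>lborel)
    \<le> (\<integral>\<^sup>+\<zeta>. ennreal ((norm (F \<zeta>))^2) \<partial>lborel) * (\<integral>\<^sup>+\<eta>. ennreal (K \<eta> * norm (F (\<xi> + \<eta>))) \<partial>lborel)"
    (is "_ \<le> ?L * ?Y")
proof -
  have "(\<integral>\<^sup>+z. ennreal (K (fst z) * norm (F (\<xi> + fst z)) * norm (F (\<xi> + snd z))
        * norm (F (\<xi> + fst z + snd z))) \<partial>lborel)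
      = (\<integral>\<^sup>+\<eta>. ennreal (K \<eta> * norm (F (\<xi> + \<eta>))) *
           (\<integral>\<^sup>+\<sigma>. ennreal (norm (F (\<xi> + \<sigma>)) * norm (F ((\<xi> + \<eta>) + \<sigma>))) \<partial>lborel) \<partial>lborel)"
    using K by (simp add: lborel_prod[symmetric] lborel.nn_integral_fst[symmetric]
        nn_integral_cmult[symmetric] ennreal_mult[symmetric] mult.assoc add.assoc)
  also have "\<dots> \<le> (\<integral>\<^sup>+\<eta>. ennreal (K \<eta> * norm (F (\<xi> + \<eta>))) * ?L \<partial>lborel)"
    by (intro nn_integral_mono mult_left_mono nn_integral_translates_product_le) auto
  also have "\<dots> = ?L * ?Y"
    by (simp add: nn_integral_multc mult.commute)
  finally show ?thesis .
qed

lemma norm_I0_le_product: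
  assumes "\<And>x. 0 \<le> \<phi> x" and [measurable]: "\<phi> \<in> borel_measurable borel" "F \<in> borel_measurable lborel"
  shows "ennreal (cmod (I0 \<phi> F l s \<xi>)) \<le> ennreal (2 * (2*pi) powr (-5)) *
    ((\<integral>\<^sup>+\<zeta>. ennreal ((cmod (F \<zeta>))^2) \<partial>lborel)
      * (\<integral>\<^sup>+\<eta>. ennreal (coulomb_cutoff \<phi> l \<eta> * cmod (F (\<xi> + \<eta>))) \<partial>lborel))"
proof -
  have "0 \<le> coulomb_cutoff \<phi> l \<eta>" for \<eta>
    using assms(1) by (simp add: coulomb_cutoff_def)
  have "ennreal (cmod (I0 \<phi> F l s \<xi>)) \<le> ennreal (2 * (2*pi) powr (-5)) *
    (\<integral>\<^sup>+z. ennreal (coulomb_cutoff \<phi> l (fst z) * cmod (F (\<xi> + fst z)) * cmod (F (\<xi> + snd z))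
        * cmod (F (\<xi> + fst z + snd z))) \<partial>lborel)"
    by (rule norm_I0_le) (rule assms(1))
  also have "\<dots> \<le> ennreal (2 * (2*pi) powr (-5)) *
    ((\<integral>\<^sup>+\<zeta>. ennreal ((cmod (F \<zeta>))^2) \<partial>lborel)
      * (\<integral>\<^sup>+\<eta>. ennreal (coulomb_cutoff \<phi> l \<eta> * cmod (F (\<xi> + \<eta>))) \<partial>lborel))"
    using \<open>\<And>\<eta>. 0 \<le> coulomb_cutoff \<phi> l \<eta>\<close> by (intro mult_left_mono nn_integral_trilinear_le) auto
  finally show ?thesis .
qed

section \<open>Bounds on small balls\<close>

lemma cball_in_borel [measurable]: "cball c r \<in> sets borel"
  by (simp add: borel_closed)

lemma one_plus_norm_le_mult:
  fixes x y :: "'a::real_normed_vector"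
  shows "1 + norm x \<le> (1 + norm (x + y)) * (1 + norm y)"
proof -
  have "norm x \<le> norm (x + y) + norm y"
    using norm_triangle_ineq4[of "x + y" y] by simp
  moreover have "(1 + norm (x + y)) * (1 + norm y) = 1 + norm (x + y) + norm y + norm (x + y) * norm y"
    by (simp add: algebra_simps)
  ultimately show ?thesis
    using mult_nonneg_nonneg[OF norm_ge_zero norm_ge_zero, of "x + y" y] by linarith
qed

lemma one_plus_norm_power_le:
  fixes \<xi> \<eta> :: "'a::real_normed_vector"
  assumes "norm \<eta> \<le> \<rho>"
  shows "(1 + norm \<xi>)^n \<le> (1 + \<rho>)^n * (1 + norm (\<xi> + \<eta>))^n"
proof -
  have "1 + norm \<xi> \<le> (1 + norm (\<xi> + \<eta>)) * (1 + norm \<eta>)"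
    by (rule one_plus_norm_le_mult)
  also have "\<dots> \<le> (1 + norm (\<xi> + \<eta>)) * (1 + \<rho>)"
    using assms by (intro mult_left_mono) auto
  finally show ?thesis
    by (metis power_mono power_mult_distrib mult.commute add_nonneg_nonneg zero_le_one norm_ge_zero)
qed

lemma norm_le_of_weighted_le:
  fixes \<xi> \<eta> :: "'a::real_normed_vector"
  assumes "(1 + norm (\<xi> + \<eta>))^n * a \<le> E" "norm \<eta> \<le> 1" "0 \<le> a"
  shows "a \<le> 2^n * E / (1 + norm \<xi>)^n"
proof -
  have "(1 + norm \<xi>)^n * a \<le> (2^n * (1 + norm (\<xi> + \<eta>))^n) * a"
    using one_plus_norm_power_le[OF assms(2), of \<xi> n] assms(3) by (intro mult_right_mono) auto
  also have "\<dots> \<le> 2^n * E"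
    using assms(1) by (simp add: mult.assoc)
  finally show ?thesis
    by (simp add: field_simps add_pos_nonneg)
qed

lemma nn_integral_inner_ball_le:
  fixes F :: "R3 \<Rightarrow> 'b::real_normed_vector"
  assumes [measurable]: "F \<in> borel_measurable lborel"
    and bound: "AE \<zeta> in lborel. (1 + norm \<zeta>)^n * norm (F \<zeta>) \<le> E"
    and "0 < \<tau>" "\<tau> \<le> 1" "0 \<le> E"
  shows "(\<integral>\<^sup>+\<eta>. ennreal (norm \<eta> powr (-2) * indicator (cball 0 \<tau>) \<eta> * norm (F (\<xi> + \<eta>))) \<partial>lborel)
    \<le> ennreal (2^n * E / (1 + norm \<xi>)^n * (64 * \<tau>))"
proof -
  define c where "c = 2^n * E / (1 + norm \<xi>)^n"
  have "0 \<le> c"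
    using assms by (simp add: c_def)
  have [measurable]: "(\<lambda>\<eta>::R3. norm \<eta> powr (-2) * indicator (cball 0 \<tau>) \<eta>) \<in> borel_measurable borel"
    by measurable
  have "AE \<eta> in lborel. (1 + norm (\<xi> + \<eta>))^n * norm (F (\<xi> + \<eta>)) \<le> E"
    using bound by (rule AE_lborel_translate[rotated]) measurable
  then have "AE \<eta> in lborel. ennreal (norm \<eta> powr (-2) * indicator (cball 0 \<tau>) \<eta> * norm (F (\<xi> + \<eta>)))
      \<le> ennreal c * ennreal (norm \<eta> powr (-2) * indicator (cball 0 \<tau>) \<eta>)"
  proof eventually_elim
    fix \<eta> :: R3
    assume weighted: "(1 + norm (\<xi> + \<eta>))^n * norm (F (\<xi> + \<eta>)) \<le> E"
    have F_le: "norm (F (\<xi> + \<eta>)) \<le> c" if "norm \<eta> \<le> \<tau>"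
      unfolding c_def using weighted that \<open>\<tau> \<le> 1\<close> by (intro norm_le_of_weighted_le) auto
    have "norm \<eta> powr (-2) * indicator (cball 0 \<tau>) \<eta> * norm (F (\<xi> + \<eta>))
        \<le> c * (norm \<eta> powr (-2) * indicator (cball 0 \<tau>) \<eta>)"
    proof (cases "norm \<eta> \<le> \<tau>")
      case True
      then show ?thesis
        using mult_left_mono[OF F_le[OF True], of "norm \<eta> powr (-2)"] by (simp add: mult.commute)
    qed simp
    then show "ennreal (norm \<eta> powr (-2) * indicator (cball 0 \<tau>) \<eta> * norm (F (\<xi> + \<eta>)))
        \<le> ennreal c * ennreal (norm \<eta> powr (-2) * indicator (cball 0 \<tau>) \<eta>)"
      using \<open>0 \<le> c\<close> by (simp add: ennreal_mult[symmetric] ennreal_leI)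
  qed
  then have "(\<integral>\<^sup>+\<eta>. ennreal (norm \<eta> powr (-2) * indicator (cball 0 \<tau>) \<eta> * norm (F (\<xi> + \<eta>))) \<partial>lborel)
      \<le> ennreal c * (\<integral>\<^sup>+\<eta>. ennreal (norm (\<eta>::R3) powr (-2) * indicator (cball 0 \<tau>) \<eta>) \<partial>lborel)"
    by (subst nn_integral_cmult[symmetric]) (auto intro: nn_integral_mono_AE)
  also have "\<dots> \<le> ennreal c * ennreal (64 * \<tau>)"
    using assms by (intro mult_left_mono nn_integral_norm_powr_minus_two_le) auto
  also have "\<dots> = ennreal (c * (64 * \<tau>))"
    using \<open>0 \<le> c\<close> \<open>0 < \<tau>\<close> by (intro ennreal_mult[symmetric]) auto
  finally show ?thesis
    by (simp only: c_def)
qed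

lemma one_plus_power2_le: "(1 + z)^2 \<le> 2 * (1 + z^2)" for z :: real
  using sum_squares_bound[of 1 z] by (simp add: power2_sum)

lemma one_plus_norm_power_le_weight:
  fixes \<xi> \<eta> :: "'a::real_normed_vector"
  assumes "norm \<eta> \<le> R"
  shows "(1 + norm \<xi>)^(2*N) \<le> (1 + R)^(2*N) * 2^N * (1 + (norm (\<xi> + \<eta>))^2)^N"
proof -
  have "(1 + norm \<xi>)^(2*N) \<le> (1 + R)^(2*N) * ((1 + norm (\<xi> + \<eta>))^2)^N"
    using one_plus_norm_power_le[OF assms, of \<xi> "2*N"] by (simp add: power_mult)
  also have "\<dots> \<le> (1 + R)^(2*N) * (2 * (1 + (norm (\<xi> + \<eta>))^2))^N"
    by (intro mult_left_mono power_mono one_plus_power2_le) auto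
  finally show ?thesis
    by (simp only: power_mult_distrib mult.assoc)
qed

lemma nn_integral_cball_power2_le_sobolev:
  fixes F :: "'a::euclidean_space \<Rightarrow> 'b::real_normed_vector"
  assumes [measurable]: "F \<in> borel_measurable lborel"
    and sobolev: "(\<integral>\<^sup>+\<zeta>. ennreal ((1 + (norm \<zeta>)^2)^N * (norm (F \<zeta>))^2) \<partial>lborel) \<le> ennreal W"
    and "\<rho> \<le> R"
  shows "(\<integral>\<^sup>+\<eta>. ennreal ((indicator (cball 0 \<rho>) \<eta> * norm (F (\<xi> + \<eta>)))^2) \<partial>lborel)
    \<le> ennreal ((1 + R)^(2*N) * 2^N / (1 + norm \<xi>)^(2*N) * W)"
proof -
  define c where "c = (1 + R)^(2*N) * 2^N / (1 + norm \<xi>)^(2*N)"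
  have "0 < 1 + norm \<xi>"
    by (simp add: add_pos_nonneg)
  then have "0 \<le> c"
    by (simp add: c_def)
  have "(indicator (cball 0 \<rho>) \<eta> * norm (F (\<xi> + \<eta>)))^2
      \<le> c * ((1 + (norm (\<xi> + \<eta>))^2)^N * (norm (F (\<xi> + \<eta>)))^2)" for \<eta>
  proof (cases "norm \<eta> \<le> \<rho>")
    case True
    with \<open>\<rho> \<le> R\<close> have "(1 + norm \<xi>)^(2*N) * 1 \<le> (1 + norm \<xi>)^(2*N) * (c * (1 + (norm (\<xi> + \<eta>))^2)^N)"
      using one_plus_norm_power_le_weight[of \<eta> R \<xi> N] \<open>0 < 1 + norm \<xi>\<close> by (simp add: c_def)
    then have "1 \<le> c * (1 + (norm (\<xi> + \<eta>))^2)^N"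
      using \<open>0 < 1 + norm \<xi>\<close> by (subst (asm) mult_le_cancel_left_pos) auto
    then show ?thesis
      using True mult_right_mono[of 1 "c * (1 + (norm (\<xi> + \<eta>))^2)^N" "(norm (F (\<xi> + \<eta>)))^2"]
      by (simp add: mult.assoc)
  qed (use \<open>0 \<le> c\<close> in simp)
  then have "(\<integral>\<^sup>+\<eta>. ennreal ((indicator (cball 0 \<rho>) \<eta> * norm (F (\<xi> + \<eta>)))^2) \<partial>lborel)
      \<le> (\<integral>\<^sup>+\<eta>. ennreal c * ennreal ((1 + (norm (\<xi> + \<eta>))^2)^N * (norm (F (\<xi> + \<eta>)))^2) \<partial>lborel)"
    using \<open>0 \<le> c\<close> by (intro nn_integral_mono) (simp add: ennreal_mult'[symmetric] ennreal_leI)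
  also have "\<dots> = ennreal c * (\<integral>\<^sup>+\<zeta>. ennreal ((1 + (norm \<zeta>)^2)^N * (norm (F \<zeta>))^2) \<partial>lborel)"
  proof -
    have weighted: "(\<lambda>\<zeta>. ennreal ((1 + (norm \<zeta>)^2)^N * (norm (F \<zeta>))^2)) \<in> borel_measurable lborel"
      by measurable
    show ?thesis
      by (simp add: nn_integral_cmult nn_integral_lborel_translate[OF weighted, of \<xi>])
  qed
  also have "\<dots> \<le> ennreal (c * W)"
    using sobolev \<open>0 \<le> c\<close> by (simp add: ennreal_mult' mult_left_mono)
  finally show ?thesis
    by (simp only: c_def)
qed

lemma le_weighted_AM_GM: "0 < w \<Longrightarrow> y \<le> w / 2 + y^2 / (2 * w)" for w y :: real
proof -
  assume "0 < w"
  then have "w / 2 + y^2 / (2 * w) - y = (y - w)^2 / (2 * w)"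
    by (simp add: field_simps power2_eq_square)
  moreover have "0 \<le> (y - w)^2 / (2 * w)"
    using \<open>0 < w\<close> by simp
  ultimately show ?thesis
    by linarith
qed

lemma nn_integral_cball_le_AM_GM:
  fixes y :: "R3 \<Rightarrow> real"
  assumes [measurable]: "y \<in> borel_measurable lborel"
    and L2: "(\<integral>\<^sup>+\<eta>. ennreal ((y \<eta>)^2) \<partial>lborel) \<le> ennreal Q"
    and "0 \<le> r" "0 < w" "0 \<le> Q"
  shows "(\<integral>\<^sup>+\<eta>. ennreal (indicator (cball 0 r) \<eta> * y \<eta>) \<partial>lborel) \<le> ennreal (w / 2 * (8 * r^3) + Q / (2 * w))"
proof -
  have "ennreal (indicator (cball 0 r) \<eta> * y \<eta>)
      \<le> ennreal (w / 2) * indicator (cball 0 r) \<eta> + ennreal (1 / (2 * w)) * ennreal ((y \<eta>)^2)" for \<eta>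
  proof (cases "\<eta> \<in> cball 0 r")
    case True
    have "y \<eta> \<le> w / 2 + 1 / (2 * w) * (y \<eta>)^2"
      using le_weighted_AM_GM[OF \<open>0 < w\<close>, of "y \<eta>"] by simp
    then show ?thesis
      using True \<open>0 < w\<close>
      by (simp add: ennreal_leI ennreal_mult[symmetric] ennreal_plus[symmetric] del: ennreal_plus)
  qed simp
  then have "(\<integral>\<^sup>+\<eta>. ennreal (indicator (cball 0 r) \<eta> * y \<eta>) \<partial>lborel)
      \<le> (\<integral>\<^sup>+\<eta>. ennreal (w / 2) * indicator (cball 0 r) \<eta> + ennreal (1 / (2 * w)) * ennreal ((y \<eta>)^2) \<partial>lborel)"
    by (rule nn_integral_mono)
  also have "\<dots> = ennreal (w / 2) * emeasure lborel (cball (0::R3) r)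
      + ennreal (1 / (2 * w)) * (\<integral>\<^sup>+\<eta>. ennreal ((y \<eta>)^2) \<partial>lborel)"
    by (simp add: nn_integral_add nn_integral_cmult nn_integral_cmult_indicator)
  also have "\<dots> \<le> ennreal (w / 2) * ennreal (8 * r^3) + ennreal (1 / (2 * w)) * ennreal Q"
    by (intro add_mono mult_left_mono emeasure_cball_le L2) auto
  also have "\<dots> = ennreal (w / 2 * (8 * r^3) + Q / (2 * w))"
    using assms by (simp add: ennreal_mult[symmetric] ennreal_plus[symmetric] del: ennreal_plus)
  finally show ?thesis .
qed

section \<open>Splitting the kernel into shells\<close>

lemma coulomb_cutoff_le_shells:
  assumes \<phi>: "\<And>x. 0 \<le> \<phi> x \<and> \<phi> x \<le> 1" and supp: "\<And>x. 8/5 < \<bar>x\<bar> \<Longrightarrow> \<phi> x = 0"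
    and \<rho>: "8/5 * 2 powr l \<le> \<rho>" and "0 \<le> v" "0 < \<tau>\<^sub>1" "0 < \<tau>\<^sub>2"
  shows "coulomb_cutoff \<phi> l \<eta> * v \<le> norm \<eta> powr (-2) * indicator (cball 0 \<tau>\<^sub>1) \<eta> * v
      + 1 / \<tau>\<^sub>1^2 * (indicator (cball 0 \<tau>\<^sub>2) \<eta> * (indicator (cball 0 \<rho>) \<eta> * v))
      + 1 / \<tau>\<^sub>2^2 * (indicator (cball 0 \<rho>) \<eta> * (indicator (cball 0 \<rho>) \<eta> * v))"
    (is "_ \<le> ?inner + ?middle + ?outer")
proof -
  have "0 \<le> ?inner" "0 \<le> ?middle" "0 \<le> ?outer"
    using \<open>0 \<le> v\<close> by auto
  consider "norm \<eta> = 0" | "\<rho> < norm \<eta>" | "0 < norm \<eta>" "norm \<eta> \<le> \<rho>"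
    by fastforce
  then show ?thesis
  proof cases
    case 1
    then show ?thesis
      using \<open>0 \<le> ?inner\<close> \<open>0 \<le> ?middle\<close> \<open>0 \<le> ?outer\<close> by (simp add: coulomb_cutoff_def)
  next
    case 2
    then have "8/5 < \<bar>norm \<eta> / 2 powr l\<bar>"
      using \<rho> by (simp add: field_simps)
    then show ?thesis
      using supp \<open>0 \<le> ?inner\<close> \<open>0 \<le> ?middle\<close> \<open>0 \<le> ?outer\<close> by (simp add: coulomb_cutoff_def)
  next
    case 3
    have "coulomb_cutoff \<phi> l \<eta> * v \<le> 1 / (norm \<eta>)^2 * v"
      using 3 \<phi>[of "norm \<eta> / 2 powr l"] \<open>0 \<le> v\<close>
      by (simp add: coulomb_cutoff_def powr_minus powr_realpow divide_inverse mult_left_le_one_le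
          mult_left_le mult.assoc)
    moreover have "1 / (norm \<eta>)^2 * v \<le> 1 / t^2 * v" if "0 < t" "t \<le> norm \<eta>" for t
      using that \<open>0 \<le> v\<close> by (intro mult_right_mono divide_left_mono power_mono mult_pos_pos) auto
    moreover have "?inner = 1 / (norm \<eta>)^2 * v" if "norm \<eta> \<le> \<tau>\<^sub>1"
      using that 3 by (simp add: powr_minus powr_realpow divide_inverse)
    moreover have "?middle = 1 / \<tau>\<^sub>1^2 * v" if "norm \<eta> \<le> \<tau>\<^sub>2"
      using that 3 by simp
    moreover have "?outer = 1 / \<tau>\<^sub>2^2 * v"
      using 3 by simp
    ultimately show ?thesis
      using \<open>0 < \<tau>\<^sub>1\<close> \<open>0 < \<tau>\<^sub>2\<close> \<open>0 \<le> ?inner\<close> \<open>0 \<le> ?middle\<close> \<open>0 \<le> ?outer\<close>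
      by (smt (verit))
  qed
qed

lemma ennreal_add_cmult3:
  fixes a b c x y :: real
  assumes "0 \<le> a" "0 \<le> b" "0 \<le> c" "0 \<le> x" "0 \<le> y"
  shows "ennreal (a + x * b + y * c) = ennreal a + ennreal x * ennreal b + ennreal y * ennreal c"
  using assms by (simp add: ennreal_mult)

lemma nn_integral_add_cmult3:
  fixes f g h :: "'a \<Rightarrow> real"
  assumes [measurable]: "f \<in> borel_measurable M" "g \<in> borel_measurable M" "h \<in> borel_measurable M"
    and "\<And>x. 0 \<le> f x" "\<And>x. 0 \<le> g x" "\<And>x. 0 \<le> h x" "0 \<le> a" "0 \<le> b"
  shows "(\<integral>\<^sup>+x. ennreal (f x + a * g x + b * h x) \<partial>M)
    = (\<integral>\<^sup>+x. ennreal (f x) \<partial>M) + ennreal a * (\<integral>\<^sup>+x. ennreal (g x) \<partial>M) + ennreal b * (\<integral>\<^sup>+x. ennreal (h x) \<partial>M)"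
  using assms by (simp add: ennreal_mult nn_integral_add nn_integral_cmult)

lemma nn_integral_coulomb_cutoff_le:
  fixes F :: "R3 \<Rightarrow> 'b::real_normed_vector"
  assumes \<phi>: "\<And>x. 0 \<le> \<phi> x \<and> \<phi> x \<le> 1" and supp: "\<And>x. 8/5 < \<bar>x\<bar> \<Longrightarrow> \<phi> x = 0"
    and [measurable]: "F \<in> borel_measurable lborel"
    and weighted: "AE \<zeta> in lborel. (1 + norm \<zeta>)^n * norm (F \<zeta>) \<le> E" and "0 \<le> E"
    and L2: "(\<integral>\<^sup>+\<eta>. ennreal ((indicator (cball 0 \<rho>) \<eta> * norm (F (\<xi> + \<eta>)))^2) \<partial>lborel) \<le> ennreal Q"
    and "0 \<le> Q" and \<rho>: "8/5 * 2 powr l \<le> \<rho>"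
    and \<tau>: "0 < \<tau>\<^sub>1" "\<tau>\<^sub>1 \<le> 1" "0 < \<tau>\<^sub>2" and w: "0 < w\<^sub>2" "0 < w\<^sub>3"
  shows "(\<integral>\<^sup>+\<eta>. ennreal (coulomb_cutoff \<phi> l \<eta> * norm (F (\<xi> + \<eta>))) \<partial>lborel)
    \<le> ennreal (2^n * E / (1 + norm \<xi>)^n * (64 * \<tau>\<^sub>1)
         + 1 / \<tau>\<^sub>1^2 * (w\<^sub>2 / 2 * (8 * \<tau>\<^sub>2^3) + Q / (2 * w\<^sub>2))
         + 1 / \<tau>\<^sub>2^2 * (w\<^sub>3 / 2 * (8 * \<rho>^3) + Q / (2 * w\<^sub>3)))"
proof -
  have "0 \<le> \<rho>"
    using \<rho> powr_ge_zero[of 2 l] by linarith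
  define y where "y \<eta> = indicator (cball 0 \<rho>) \<eta> * norm (F (\<xi> + \<eta>))" for \<eta> :: R3
  define inner where "inner \<eta> = norm \<eta> powr (-2) * indicator (cball 0 \<tau>\<^sub>1) \<eta> * norm (F (\<xi> + \<eta>))" for \<eta> :: R3
  have [measurable]: "y \<in> borel_measurable lborel" "inner \<in> borel_measurable lborel"
    unfolding y_def inner_def by measurable
  have "(\<integral>\<^sup>+\<eta>. ennreal (coulomb_cutoff \<phi> l \<eta> * norm (F (\<xi> + \<eta>))) \<partial>lborel)
      \<le> (\<integral>\<^sup>+\<eta>. ennreal (inner \<eta> + 1 / \<tau>\<^sub>1^2 * (indicator (cball 0 \<tau>\<^sub>2) \<eta> * y \<eta>)
          + 1 / \<tau>\<^sub>2^2 * (indicator (cball 0 \<rho>) \<eta> * y \<eta>)) \<partial>lborel)"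
    unfolding inner_def y_def
    by (intro nn_integral_mono ennreal_leI coulomb_cutoff_le_shells[OF \<phi> supp \<rho> norm_ge_zero \<tau>(1) \<tau>(3)])
  also have "\<dots> = (\<integral>\<^sup>+\<eta>. ennreal (inner \<eta>) \<partial>lborel)
      + ennreal (1 / \<tau>\<^sub>1^2) * (\<integral>\<^sup>+\<eta>. ennreal (indicator (cball 0 \<tau>\<^sub>2) \<eta> * y \<eta>) \<partial>lborel)
      + ennreal (1 / \<tau>\<^sub>2^2) * (\<integral>\<^sup>+\<eta>. ennreal (indicator (cball 0 \<rho>) \<eta> * y \<eta>) \<partial>lborel)"
    by (rule nn_integral_add_cmult3) (auto simp: inner_def y_def)
  also have "\<dots> \<le> ennreal (2^n * E / (1 + norm \<xi>)^n * (64 * \<tau>\<^sub>1))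
      + ennreal (1 / \<tau>\<^sub>1^2) * ennreal (w\<^sub>2 / 2 * (8 * \<tau>\<^sub>2^3) + Q / (2 * w\<^sub>2))
      + ennreal (1 / \<tau>\<^sub>2^2) * ennreal (w\<^sub>3 / 2 * (8 * \<rho>^3) + Q / (2 * w\<^sub>3))"
    unfolding inner_def using L2 \<tau> w \<open>0 \<le> \<rho>\<close> \<open>0 \<le> Q\<close> \<open>0 \<le> E\<close>
    by (intro add_mono mult_left_mono nn_integral_inner_ball_le[OF _ weighted]
        nn_integral_cball_le_AM_GM) (auto simp: y_def)
  also have "\<dots> = ennreal (2^n * E / (1 + norm \<xi>)^n * (64 * \<tau>\<^sub>1)
         + 1 / \<tau>\<^sub>1^2 * (w\<^sub>2 / 2 * (8 * \<tau>\<^sub>2^3) + Q / (2 * w\<^sub>2))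
         + 1 / \<tau>\<^sub>2^2 * (w\<^sub>3 / 2 * (8 * \<rho>^3) + Q / (2 * w\<^sub>3)))"
    using \<open>0 \<le> E\<close> \<open>0 \<le> Q\<close> \<open>0 \<le> \<rho>\<close> \<tau> w by (intro ennreal_add_cmult3[symmetric]) auto
  finally show ?thesis .
qed

(* The outer-shell terms of nn_integral_coulomb_cutoff_le for the radii tau1 = q^-152, tau2 = q^-112,
   the AM-GM weights B q^168, B q^87 and Q = D S B^2, where B = E (1 + |xi|)^-N. *)
lemma outer_shell_terms_le:
  fixes q B D S \<rho> :: real
  assumes "1 \<le> q" "0 < B" "0 \<le> D" "0 \<le> S" "0 \<le> \<rho>" "\<rho> \<le> 16/5 / q^58"
  shows "1 / (1 / q^152)^2 * (B * q^168 / 2 * (8 * (1 / q^112)^3) + D * S * B^2 / (2 * (B * q^168)))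
       + 1 / (1 / q^112)^2 * (B * q^87 / 2 * (8 * \<rho>^3) + D * S * B^2 / (2 * (B * q^87)))
     \<le> B * q^137 * (4 + 4 * (16/5)^3 + D * S)"
proof -
  have "0 < q"
    using assms by simp
  have middle: "1 / (1 / q^152)^2 * (B * q^168 / 2 * (8 * (1 / q^112)^3) + D * S * B^2 / (2 * (B * q^168)))
      = B * q^136 * (4 + D * S / 2)"
    using \<open>0 < q\<close> \<open>0 < B\<close> by (simp add: field_simps power2_eq_square flip: power_add power_mult)
  have outer: "1 / (1 / q^112)^2 * (B * q^87 / 2 * (8 * \<rho>^3) + D * S * B^2 / (2 * (B * q^87)))
      = 4 * B * q^311 * \<rho>^3 + B * q^137 * (D * S / 2)"
    using \<open>0 < q\<close> \<open>0 < B\<close> by (simp add: field_simps power2_eq_square flip: power_add power_mult)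
  have "\<rho>^3 \<le> (16/5 / q^58)^3"
    using assms by (intro power_mono) auto
  then have "4 * B * q^311 * \<rho>^3 \<le> 4 * B * q^311 * (16/5 / q^58)^3"
    using assms by (intro mult_left_mono) auto
  also have "\<dots> = B * q^137 * (4 * (16/5)^3)"
    using \<open>0 < q\<close> by (simp add: field_simps flip: power_add power_mult)
  finally have "4 * B * q^311 * \<rho>^3 \<le> B * q^137 * (4 * (16/5)^3)" .
  have "B * q^136 * (4 + D * S / 2) \<le> B * q^137 * (4 + D * S / 2)"
    using assms by (intro mult_right_mono mult_left_mono power_increasing) auto
  with middle outer \<open>4 * B * q^311 * \<rho>^3 \<le> B * q^137 * (4 * (16/5)^3)\<close> show ?thesis
    by (simp add: algebra_simps)
qed

lemma dyadic_kernel_terms_le: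
  fixes q A B D S \<rho> E p :: real
  assumes "1 \<le> q" "0 < A" "0 < B" "0 \<le> D" "0 \<le> S" "0 \<le> \<rho>" "\<rho> \<le> 16/5 / q^58" "0 \<le> E"
    and "1 / A^10 \<le> p" "B \<le> E * p / q^264"
  shows "2^10 * E / A^10 * (64 * (1 / q^152))
         + 1 / (1 / q^152)^2 * (B * q^168 / 2 * (8 * (1 / q^112)^3) + D * S * B^2 / (2 * (B * q^168)))
         + 1 / (1 / q^112)^2 * (B * q^87 / 2 * (8 * \<rho>^3) + D * S * B^2 / (2 * (B * q^87)))
      \<le> 2^16 * E * p / q^152 + E * p / q^127 * (4 + 4 * (16/5)^3 + D * S)"
proof -
  have "0 < q"
    using assms by simp
  have "2^10 * E / A^10 * (64 * (1 / q^152)) = 2^16 * E * (1 / A^10) / q^152"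
    by simp
  also have "\<dots> \<le> 2^16 * E * p / q^152"
    using assms \<open>0 < q\<close> by (intro divide_right_mono mult_left_mono) auto
  finally have inner: "2^10 * E / A^10 * (64 * (1 / q^152)) \<le> 2^16 * E * p / q^152" .
  have "B * q^137 \<le> E * p / q^264 * q^137"
    using assms by (intro mult_right_mono) auto
  also have "\<dots> = E * p / q^127"
    using \<open>0 < q\<close> by (simp add: field_simps flip: power_add)
  finally have "B * q^137 * (4 + 4 * (16/5)^3 + D * S) \<le> E * p / q^127 * (4 + 4 * (16/5)^3 + D * S)"
    using assms by (intro mult_right_mono) auto
  with inner outer_shell_terms_le[OF assms(1,3-7)] show ?thesis
    by linarith
qed

lemma nn_integral_coulomb_cutoff_dyadic_le:
  fixes F :: "R3 \<Rightarrow> 'b::real_normed_vector"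
  assumes \<phi>: "\<And>x. 0 \<le> \<phi> x \<and> \<phi> x \<le> 1" and supp: "\<And>x. 8/5 < \<bar>x\<bar> \<Longrightarrow> \<phi> x = 0"
    and [measurable]: "F \<in> borel_measurable lborel"
    and weighted: "AE \<zeta> in lborel. (1 + norm \<zeta>)^10 * norm (F \<zeta>) \<le> E" and "0 < E"
    and sobolev: "(\<integral>\<^sup>+\<zeta>. ennreal ((1 + (norm \<zeta>)^2)^N * (norm (F \<zeta>))^2) \<partial>lborel)
      \<le> ennreal ((2*pi)^3 * E^2 * S)"
    and "0 \<le> S" "1 \<le> q" and l: "2 powr l \<le> 2 / q^58"
    and decay: "1 / (1 + norm \<xi>)^10 \<le> p" "1 / (1 + norm \<xi>)^N \<le> p / q^264"
  shows "(\<integral>\<^sup>+\<eta>. ennreal (coulomb_cutoff \<phi> l \<eta> * norm (F (\<xi> + \<eta>))) \<partial>lborel)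
    \<le> ennreal (2^16 * E * p / q^152
        + E * p / q^127 * (4 + 4 * (16/5)^3 + (21/5)^(2*N) * 2^N * (2*pi)^3 * S))"
proof -
  define A where "A = 1 + norm \<xi>"
  define B where "B = E / A^N"
  define D :: real where "D = (21/5)^(2*N) * 2^N * (2*pi)^3"
  define \<rho> where "\<rho> = 8/5 * 2 powr l"
  have "0 < A"
    by (simp add: A_def add_pos_nonneg)
  then have "0 < B"
    using \<open>0 < E\<close> by (simp add: B_def)
  have "0 < q" "0 \<le> D"
    using \<open>1 \<le> q\<close> by (simp_all add: D_def)
  have "0 \<le> \<rho>" "\<rho> \<le> 16/5 / q^58"
    using l by (simp_all add: \<rho>_def)
  moreover have "16/5 / q^58 \<le> 16/5"
    using one_le_power[OF \<open>1 \<le> q\<close>, of 58] by (simp add: divide_le_eq)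
  ultimately have "\<rho> \<le> 16/5"
    by linarith
  have "(21/5)^(2*N) * 2^N / A^(2*N) * ((2*pi)^3 * E^2 * S) = D * S * B^2"
    by (simp add: D_def B_def power_mult power2_eq_square field_simps)
  then have L2: "(\<integral>\<^sup>+\<eta>. ennreal ((indicator (cball 0 \<rho>) \<eta> * norm (F (\<xi> + \<eta>)))^2) \<partial>lborel)
      \<le> ennreal (D * S * B^2)"
    using nn_integral_cball_power2_le_sobolev[OF _ sobolev \<open>\<rho> \<le> 16/5\<close>, of \<xi>] by (simp add: A_def)
  have "(\<integral>\<^sup>+\<eta>. ennreal (coulomb_cutoff \<phi> l \<eta> * norm (F (\<xi> + \<eta>))) \<partial>lborel)
      \<le> ennreal (2^10 * E / A^10 * (64 * (1 / q^152))
         + 1 / (1 / q^152)^2 * (B * q^168 / 2 * (8 * (1 / q^112)^3) + D * S * B^2 / (2 * (B * q^168)))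
         + 1 / (1 / q^112)^2 * (B * q^87 / 2 * (8 * \<rho>^3) + D * S * B^2 / (2 * (B * q^87))))"
    unfolding A_def
    using \<open>0 < q\<close> \<open>1 \<le> q\<close> \<open>0 < B\<close> \<open>0 \<le> D\<close> \<open>0 \<le> S\<close> \<open>0 < E\<close>
    by (intro nn_integral_coulomb_cutoff_le[OF \<phi> supp _ weighted _ L2]) (auto simp: \<rho>_def)
  also have "\<dots> \<le> ennreal (2^16 * E * p / q^152 + E * p / q^127 * (4 + 4 * (16/5)^3 + D * S))"
  proof (intro ennreal_leI dyadic_kernel_terms_le)
    show "B \<le> E * p / q^264"
      using decay(2) \<open>0 < E\<close> unfolding B_def A_def by (simp add: divide_inverse mult_left_mono)
  qed (use \<open>1 \<le> q\<close> \<open>0 < A\<close> \<open>0 < B\<close> \<open>0 \<le> D\<close> \<open>0 \<le> S\<close> \<open>0 \<le> \<rho>\<close> \<open>\<rho> \<le> 16/5 / q^58\<close> \<open>0 < E\<close>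
      decay(1) A_def in auto)
  finally show ?thesis
    by (simp only: D_def)
qed

lemma dyadic_bound_terms_le:
  fixes q E S p c D :: real
  assumes "1 \<le> q" "0 \<le> E" "0 \<le> p" "0 \<le> S" "S \<le> 2 * q" "0 \<le> c" "0 \<le> D"
  shows "S * (2^16 * E * p / q^152 + E * p / q^127 * (c + D * S)) \<le> (2^17 + 2 * (c + 2 * D)) * E * p / q^120"
proof -
  have "0 < q" "0 \<le> E * p"
    using assms by simp_all
  have q_le: "q \<le> q^n" "q^2 \<le> q^n" if "2 \<le> n" for n
    using that \<open>1 \<le> q\<close> power_increasing[of 1 n q] power_increasing[of 2 n q] by simp_all
  have "S * (c + D * S) \<le> 2 * q * (c + D * (2 * q))"
    using assms by (intro mult_mono add_left_mono mult_left_mono) auto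
  also have "\<dots> = 2 * c * q + 4 * D * q^2"
    by (simp add: algebra_simps power2_eq_square)
  also have "\<dots> \<le> 2 * c * q^7 + 4 * D * q^7"
    using assms q_le[of 7] by (intro add_mono mult_left_mono) auto
  finally have outer: "S * (c + D * S) \<le> 2 * (c + 2 * D) * q^7"
    by (simp add: algebra_simps)
  have "S * (2^16 * E * p / q^152 + E * p / q^127 * (c + D * S))
      = 2^16 * (E * p) * S / q^152 + (E * p) * (S * (c + D * S)) / q^127"
    by (simp add: algebra_simps)
  also have "\<dots> \<le> 2^16 * (E * p) * (2 * q^32) / q^152 + (E * p) * (2 * (c + 2 * D) * q^7) / q^127"
    using assms outer q_le[of 32] \<open>0 \<le> E * p\<close> \<open>0 < q\<close>
    by (intro add_mono divide_right_mono mult_left_mono) auto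
  also have "\<dots> = (2^17 + 2 * (c + 2 * D)) * E * p / q^120"
  proof -
    have "q^152 = q^32 * q^120" "q^127 = q^7 * q^120"
      by (simp_all flip: power_add)
    then show ?thesis
      using \<open>0 < q\<close> by (simp add: field_simps)
  qed
  finally show ?thesis .
qed

(* The eta-integral may be infinite when W = 0; this is harmless since 0 * top = 0 in ennreal. *)
lemma norm_I0_le_of_bounds:
  fixes F :: "R3 \<Rightarrow> complex"
  assumes "\<And>x. 0 \<le> \<phi> x" and [measurable]: "\<phi> \<in> borel_measurable borel" "F \<in> borel_measurable lborel"
    and L2: "(\<integral>\<^sup>+\<zeta>. ennreal ((cmod (F \<zeta>))^2) \<partial>lborel) \<le> ennreal W"
    and Y: "W \<noteq> 0 \<Longrightarrow> (\<integral>\<^sup>+\<eta>. ennreal (coulomb_cutoff \<phi> l \<eta> * cmod (F (\<xi> + \<eta>))) \<partial>lborel) \<le> ennreal Yb"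
    and "0 \<le> W" "0 \<le> Yb"
  shows "cmod (I0 \<phi> F l s \<xi>) \<le> 2 * (2*pi) powr (-5) * W * Yb"
proof -
  define c1 :: real where "c1 = 2 * (2*pi) powr (-5)"
  have "0 \<le> c1"
    by (simp add: c1_def)
  have "ennreal (cmod (I0 \<phi> F l s \<xi>)) \<le> ennreal c1 *
      ((\<integral>\<^sup>+\<zeta>. ennreal ((cmod (F \<zeta>))^2) \<partial>lborel)
        * (\<integral>\<^sup>+\<eta>. ennreal (coulomb_cutoff \<phi> l \<eta> * cmod (F (\<xi> + \<eta>))) \<partial>lborel))"
    unfolding c1_def by (rule norm_I0_le_product) (use assms(1) in auto)
  also have "\<dots> \<le> ennreal c1 * (ennreal W * ennreal Yb)"
  proof (cases "W = 0")
    case True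
    with L2 show ?thesis
      by simp
  qed (intro mult_left_mono mult_mono L2 Y; simp)
  also have "\<dots> = ennreal (c1 * W * Yb)"
    using \<open>0 \<le> c1\<close> \<open>0 \<le> W\<close> \<open>0 \<le> Yb\<close> by (simp add: ennreal_mult mult.assoc)
  finally show ?thesis
    using \<open>0 \<le> c1\<close> \<open>0 \<le> W\<close> \<open>0 \<le> Yb\<close> by (simp add: c1_def)
qed

lemma norm_I0_le_scaled:
  fixes F :: "R3 \<Rightarrow> complex"
  assumes \<phi>: "\<And>x. 0 \<le> \<phi> x \<and> \<phi> x \<le> 1" and supp: "\<And>x. 8/5 < \<bar>x\<bar> \<Longrightarrow> \<phi> x = 0"
    and [measurable]: "\<phi> \<in> borel_measurable borel" "F \<in> borel_measurable lborel"
    and "0 \<le> E" and weighted: "AE \<zeta> in lborel. (1 + norm \<zeta>)^10 * cmod (F \<zeta>) \<le> E"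
    and sobolev: "(\<integral>\<^sup>+\<zeta>. ennreal ((1 + (norm \<zeta>)^2)^N * (cmod (F \<zeta>))^2) \<partial>lborel)
      \<le> ennreal ((2*pi)^3 * E^2 * S)"
    and "0 \<le> S" "S \<le> 2 * q" "1 \<le> q" and l: "2 powr l \<le> 2 / q^58"
    and decay: "1 / (1 + norm \<xi>)^10 \<le> p" "1 / (1 + norm \<xi>)^N \<le> p / q^264" and "0 \<le> p"
  shows "cmod (I0 \<phi> F l s \<xi>) \<le> 2 * (2*pi) powr (-5) * (2*pi)^3
      * (2^17 + 2 * ((4 + 4 * (16/5)^3) + 2 * ((21/5)^(2*N) * 2^N * (2*pi)^3))) * E^3 * p / q^120"
proof -
  define c1 :: real where "c1 = 2 * (2*pi) powr (-5)"
  define c :: real where "c = 4 + 4 * (16/5)^3"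
  define D :: real where "D = (21/5)^(2*N) * 2^N * (2*pi)^3"
  define W where "W = (2*pi)^3 * E^2 * S"
  define Yb where "Yb = 2^16 * E * p / q^152 + E * p / q^127 * (c + D * S)"
  have "0 \<le> c1" "0 \<le> c" "0 \<le> D" "0 \<le> W" "0 \<le> Yb"
    using assms by (simp_all add: c1_def c_def D_def W_def Yb_def)
  have L2: "(\<integral>\<^sup>+\<zeta>. ennreal ((cmod (F \<zeta>))^2) \<partial>lborel) \<le> ennreal W"
    unfolding W_def using sobolev
    by (elim order_trans[rotated], intro nn_integral_mono ennreal_leI)
      (simp add: mult_le_cancel_right1)
  have Y: "(\<integral>\<^sup>+\<eta>. ennreal (coulomb_cutoff \<phi> l \<eta> * cmod (F (\<xi> + \<eta>))) \<partial>lborel) \<le> ennreal Yb"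
    if "W \<noteq> 0"
  proof -
    have "0 < E"
      using that \<open>0 \<le> E\<close> by (cases "E = 0") (auto simp: W_def)
    show ?thesis
      unfolding Yb_def c_def D_def
      by (rule nn_integral_coulomb_cutoff_dyadic_le[OF \<phi> supp _ weighted \<open>0 < E\<close> sobolev \<open>0 \<le> S\<close>
            \<open>1 \<le> q\<close> l decay]) measurable
  qed
  have "cmod (I0 \<phi> F l s \<xi>) \<le> c1 * W * Yb"
    unfolding c1_def using \<phi> by (intro norm_I0_le_of_bounds L2 Y \<open>0 \<le> W\<close> \<open>0 \<le> Yb\<close>) auto
  also have "\<dots> = c1 * (2*pi)^3 * E^2 * (S * Yb)"
    by (simp add: W_def)
  also have "\<dots> \<le> c1 * (2*pi)^3 * E^2 * ((2^17 + 2 * (c + 2 * D)) * E * p / q^120)"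
    unfolding Yb_def using assms \<open>0 \<le> c1\<close> \<open>0 \<le> c\<close> \<open>0 \<le> D\<close>
    by (intro mult_left_mono dyadic_bound_terms_le) auto
  finally show ?thesis
    by (simp add: c1_def c_def D_def power3_eq_cube power2_eq_square mult_ac)
qed

section \<open>The a priori bounds at a fixed time\<close>

lemma esssup_lborel_nonneg:
  assumes "\<And>x. 0 \<le> g x"
  shows "0 \<le> esssup (lborel :: 'a::euclidean_space measure) (\<lambda>x. ereal (g x))"
proof -
  have "esssup (lborel :: 'a measure) (\<lambda>x. 0) \<le> esssup lborel (\<lambda>x. ereal (g x))"
    using assms by (intro esssup_mono) auto
  then show ?thesis
    by (simp add: esssup_const)
qed

lemma le_of_ereal_add_esssup_le:
  fixes g :: "'a::euclidean_space \<Rightarrow> real"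
  assumes "0 \<le> X" "\<And>x. 0 \<le> g x" and le: "ereal X + esssup lborel (\<lambda>x. ereal (g x)) \<le> ereal E"
  shows "X \<le> E" "AE x in lborel. g x \<le> E"
proof -
  have "0 \<le> esssup lborel (\<lambda>x. ereal (g x))"
    using assms(2) by (rule esssup_lborel_nonneg)
  then have "ereal X \<le> ereal X + esssup lborel (\<lambda>x. ereal (g x))"
    by (rule add_increasing2) simp
  moreover have "esssup lborel (\<lambda>x. ereal (g x)) \<le> ereal X + esssup lborel (\<lambda>x. ereal (g x))"
    using \<open>0 \<le> X\<close> by (intro add_increasing) auto
  ultimately have "ereal X \<le> ereal E" "esssup lborel (\<lambda>x. ereal (g x)) \<le> ereal E"
    using le by (blast intro: order_trans)+
  then show "X \<le> E"
    by simp
  show "AE x in lborel. g x \<le> E"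
    using esssup_AE[of "\<lambda>x. ereal (g x)" lborel]
  proof eventually_elim
    case (elim x)
    then show ?case
      using \<open>esssup lborel (\<lambda>x. ereal (g x)) \<le> ereal E\<close> by (metis ereal_less_eq(3) order_trans)
  qed
qed

lemma Hnorm_nonneg: "0 \<le> Hnorm n g"
  unfolding Hnorm_def by (intro real_sqrt_ge_zero mult_nonneg_nonneg integral_nonneg) auto

lemma Hnorm_vec_nonneg: "0 \<le> Hnorm_vec n I gs"
  unfolding Hnorm_vec_def by (intro real_sqrt_ge_zero sum_nonneg) auto

lemma nn_integral_weighted_hat_eq_Hnorm:
  assumes LF: "L2fourier g (\<lambda>\<xi>. cis (t * Lam_sym \<xi>) * hat v \<xi>)" and "in_H N v"
  shows "(\<integral>\<^sup>+\<zeta>. ennreal ((1 + (norm \<zeta>)^2)^N * (cmod (hat g \<zeta>))^2) \<partial>lborel) = ennreal ((2*pi)^3 * (Hnorm N v)^2)"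
proof -
  define I where "I = (LINT \<xi>|lborel. (1 + (norm \<xi>)^2)^N * (cmod (hat v \<xi>))^2)"
  have int: "integrable lborel (\<lambda>\<xi>. (1 + (norm \<xi>)^2)^N * (cmod (hat v \<xi>))^2)"
    using \<open>in_H N v\<close> by (simp add: in_H_def)
  have "0 \<le> I"
    unfolding I_def by (intro integral_nonneg_AE AE_I2) auto
  moreover have "Hnorm N v = sqrt ((2*pi) powr (-3) * I)"
    by (simp add: Hnorm_def I_def)
  ultimately have "(Hnorm N v)^2 = (2*pi) powr (-3) * I"
    by simp
  then have I: "I = (2*pi)^3 * (Hnorm N v)^2"
    by (simp add: powr_minus powr_realpow field_simps)
  have "AE \<xi> in lborel. hat g \<xi> = cis (t * Lam_sym \<xi>) * hat v \<xi>"
    using L2fourier_unique_AE[OF L2fourier_hat[OF LF] LF] .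
  then have "(\<integral>\<^sup>+\<zeta>. ennreal ((1 + (norm \<zeta>)^2)^N * (cmod (hat g \<zeta>))^2) \<partial>lborel)
      = (\<integral>\<^sup>+\<zeta>. ennreal ((1 + (norm \<zeta>)^2)^N * (cmod (hat v \<zeta>))^2) \<partial>lborel)"
    by (intro nn_integral_cong_AE) (auto simp: norm_mult elim!: eventually_mono)
  also have "\<dots> = ennreal I"
    unfolding I_def by (rule nn_integral_eq_integral[OF int]) auto
  finally show ?thesis
    by (simp add: I)
qed

lemma power2_le_of_powr_mult_le:
  fixes t H \<epsilon> a :: real
  assumes "0 \<le> t" "0 \<le> H" "(1 + t) powr (- a) * H \<le> \<epsilon>"
  shows "H^2 \<le> \<epsilon>^2 * (1 + t) powr (2 * a)"
proof -
  have "H = (1 + t) powr a * ((1 + t) powr (- a) * H)"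
    using assms(1) by (simp add: powr_minus field_simps)
  also have "\<dots> \<le> (1 + t) powr a * \<epsilon>"
    using assms(3) by (intro mult_left_mono) auto
  finally have "H^2 \<le> ((1 + t) powr a * \<epsilon>)^2"
    using assms(2) by (intro power_mono) auto
  also have "\<dots> = \<epsilon>^2 * (1 + t) powr (2 * a)"
  proof -
    have "1 + t \<noteq> 0"
      using assms(1) by simp
    then show ?thesis
      by (simp add: power_mult_distrib powr_power)
  qed
  finally show ?thesis .
qed

lemma time_slice_bounds:
  fixes g v :: "R3 \<Rightarrow> complex"
  assumes LF: "L2fourier g (\<lambda>\<xi>. cis (t * Lam_sym \<xi>) * hat v \<xi>)" and "in_H 1000 v" and "0 \<le> t"
    and bound: "ereal ((1 + t) powr (- (1/1000)) * Hnorm 1000 v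
             + (1 + t) powr (- (1/1000)) * Hnorm_vec 2 UNIV (\<lambda>i x. x$i * g x)
             + (1 + t) powr (- (2/1000)) * Hnorm_vec 2 UNIV (\<lambda>(i,j) x. x$i * x$j * g x))
          + esssup lborel (\<lambda>\<xi>. ereal ((1 + norm \<xi>)^10 * cmod (hat g \<xi>)))
          \<le> ereal \<epsilon>"
  shows "hat g \<in> borel_measurable lborel" "0 \<le> \<epsilon>"
    "AE \<zeta> in lborel. (1 + norm \<zeta>)^10 * cmod (hat g \<zeta>) \<le> \<epsilon>"
    "(\<integral>\<^sup>+\<zeta>. ennreal ((1 + (norm \<zeta>)^2)^1000 * (cmod (hat g \<zeta>))^2) \<partial>lborel)
       \<le> ennreal ((2*pi)^3 * \<epsilon>^2 * (1 + t) powr (1/500))"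
proof -
  show "hat g \<in> borel_measurable lborel"
    using L2fourier_hat[OF LF] by (simp add: L2fourier_def)
  define X where "X = (1 + t) powr (- (1/1000)) * Hnorm 1000 v
      + (1 + t) powr (- (1/1000)) * Hnorm_vec 2 UNIV (\<lambda>i x. x$i * g x)
      + (1 + t) powr (- (2/1000)) * Hnorm_vec 2 UNIV (\<lambda>(i,j) x. x$i * x$j * g x)"
  have "0 \<le> (1 + t) powr (- (1/1000)) * Hnorm 1000 v"
      "0 \<le> (1 + t) powr (- (1/1000)) * Hnorm_vec 2 UNIV (\<lambda>i x. x$i * g x)"
      "0 \<le> (1 + t) powr (- (2/1000)) * Hnorm_vec 2 UNIV (\<lambda>(i,j) x. x$i * x$j * g x)"
    by (simp_all add: Hnorm_nonneg Hnorm_vec_nonneg)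
  then have "0 \<le> X" "(1 + t) powr (- (1/1000)) * Hnorm 1000 v \<le> X"
    by (simp_all add: X_def)
  note esssup_bounds = le_of_ereal_add_esssup_le[OF \<open>0 \<le> X\<close> _ bound[folded X_def]]
  show "AE \<zeta> in lborel. (1 + norm \<zeta>)^10 * cmod (hat g \<zeta>) \<le> \<epsilon>"
    by (rule esssup_bounds(2)) simp
  have "X \<le> \<epsilon>"
    by (rule esssup_bounds(1)) simp
  with \<open>0 \<le> X\<close> show "0 \<le> \<epsilon>"
    by simp
  have "(Hnorm 1000 v)^2 \<le> \<epsilon>^2 * (1 + t) powr (2 * (1/1000))"
    using \<open>(1 + t) powr (- (1/1000)) * Hnorm 1000 v \<le> X\<close> \<open>X \<le> \<epsilon>\<close>
    by (intro power2_le_of_powr_mult_le \<open>0 \<le> t\<close> Hnorm_nonneg) simp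
  then show "(\<integral>\<^sup>+\<zeta>. ennreal ((1 + (norm \<zeta>)^2)^1000 * (cmod (hat g \<zeta>))^2) \<partial>lborel)
       \<le> ennreal ((2*pi)^3 * \<epsilon>^2 * (1 + t) powr (1/500))"
    by (simp add: nn_integral_weighted_hat_eq_Hnorm[OF LF \<open>in_H 1000 v\<close>] ennreal_leI)
qed

section \<open>Dyadic scales\<close>

lemma smooth_real_continuous: "smooth_real \<phi> \<Longrightarrow> continuous_on UNIV \<phi>"
  unfolding smooth_real_def
  by (metis funpow_0 continuous_at_imp_continuous_on differentiable_imp_continuous_within)

lemma two_powr_power: "(2 powr x :: real) ^ n = 2 powr (n * x)"
  by (simp add: powr_power)

lemma one_div_power_le_two_powr:
  fixes A k :: real
  assumes "2 powr k \<le> A"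
  shows "1 / A^n \<le> 2 powr (- (n * k))"
proof -
  have "2 powr (n * k) \<le> A^n"
    using power_mono[OF assms, of n] by (simp add: two_powr_power)
  moreover have "0 < 2 powr (n * k)"
    by simp
  ultimately have "0 < A^n"
    by linarith
  with \<open>2 powr (n * k) \<le> A^n\<close> show ?thesis
    unfolding powr_minus_divide by (intro divide_left_mono mult_pos_pos) auto
qed

(* All scales of the argument are powers of q = 2^(m/80).  The decay (1 + |xi|)^-1000 <= 2^(-1000k)
   absorbs q^264 = 2^(33m/10) because k >= m/300. *)
lemma dyadic_scale_bounds:
  fixes m k :: real and \<xi> :: "'a::real_normed_vector"
  assumes "0 \<le> m" "m / 300 \<le> k" and "2 powr k \<le> norm \<xi>"
  shows "1 \<le> 2 powr (m / 80)" "2 powr (m / 500) \<le> 2 powr (m / 80)"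
    "2 powr (\<lfloor>- 29 * m / 40\<rfloor> + 1) \<le> 2 / (2 powr (m / 80))^58"
    "1 / (1 + norm \<xi>)^10 \<le> 2 powr (- 10 * k)"
    "1 / (1 + norm \<xi>)^1000 \<le> 2 powr (- 10 * k) / (2 powr (m / 80))^264"
    "2 powr (- 3 * m / 2) = 1 / (2 powr (m / 80))^120"
proof -
  show "1 \<le> 2 powr (m / 80)" "2 powr (m / 500) \<le> 2 powr (m / 80)"
    using assms(1) by (simp_all add: ge_one_powr_ge_zero)
  have "2 powr (\<lfloor>- 29 * m / 40\<rfloor> + 1) \<le> 2 powr (1 - 58 * (m / 80))"
    by simp
  then show "2 powr (\<lfloor>- 29 * m / 40\<rfloor> + 1) \<le> 2 / (2 powr (m / 80))^58"
    by (simp add: two_powr_power powr_diff)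
  have "2 powr k \<le> 1 + norm \<xi>"
    using assms(3) by simp
  note decay = one_div_power_le_two_powr[OF this]
  show "1 / (1 + norm \<xi>)^10 \<le> 2 powr (- 10 * k)"
    using decay[of 10] by simp
  have "1 / (1 + norm \<xi>)^1000 \<le> 2 powr (- 10 * k + - (264 * (m / 80)))"
    using decay[of 1000] assms(1,2) by (simp add: order_trans)
  also have "\<dots> = 2 powr (- 10 * k) / (2 powr (m / 80))^264"
    by (simp add: two_powr_power powr_diff powr_minus_divide)
  finally show "1 / (1 + norm \<xi>)^1000 \<le> 2 powr (- 10 * k) / (2 powr (m / 80))^264" .
  show "2 powr (- 3 * m / 2) = 1 / (2 powr (m / 80))^120"
    by (simp add: two_powr_power powr_minus_divide)
qed

lemma one_plus_powr_le_dyadic: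
  fixes s :: real
  assumes "0 \<le> s" "s \<le> 2^m"
  shows "(1 + s) powr (1/500) \<le> 2 * 2 powr (m / 500)"
proof -
  have "1 + s \<le> 2 * 2 powr m"
    using assms one_le_power[of "2::real" m] powr_realpow[of 2 m] by linarith
  then have "(1 + s) powr (1/500) \<le> (2 * 2 powr m) powr (1/500)"
    using assms by (intro powr_mono2) auto
  also have "\<dots> = 2 powr (1/500) * 2 powr (m / 500)"
    by (simp add: powr_mult powr_powr)
  also have "\<dots> \<le> 2 * 2 powr (m / 500)"
    using powr_le_cancel_iff[of 2 "1/500" 1] by (intro mult_right_mono) auto
  finally show ?thesis .
qed

lemma I0_dyadic_bound:
  fixes \<phi> :: "real \<Rightarrow> real"
  assumes "smooth_real \<phi>" "\<forall>x. 0 \<le> \<phi> x \<and> \<phi> x \<le> 1" "\<forall>x. \<bar>x\<bar> > 8/5 \<longrightarrow> \<phi> x = 0"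
  obtains C where "\<And>E S m k (F :: R3 \<Rightarrow> complex) s \<xi>. F \<in> borel_measurable lborel \<Longrightarrow> 0 \<le> E \<Longrightarrow>
      AE \<zeta> in lborel. (1 + norm \<zeta>)^10 * cmod (F \<zeta>) \<le> E \<Longrightarrow>
      (\<integral>\<^sup>+\<zeta>. ennreal ((1 + (norm \<zeta>)^2)^1000 * (cmod (F \<zeta>))^2) \<partial>lborel) \<le> ennreal ((2*pi)^3 * E^2 * S) \<Longrightarrow>
      0 \<le> S \<Longrightarrow> S \<le> 2 * 2 powr (m / 500) \<Longrightarrow> 0 \<le> m \<Longrightarrow> m / 300 \<le> k \<Longrightarrow> 2 powr k \<le> norm \<xi> \<Longrightarrow>
      cmod (I0 \<phi> F (\<lfloor>- 29 * m / 40\<rfloor> + 1) s \<xi>) \<le> C * E^3 * 2 powr (- 3 * m / 2) * 2 powr (- 10 * k)"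
proof -
  have \<phi>: "\<And>x. 0 \<le> \<phi> x \<and> \<phi> x \<le> 1" and supp: "\<And>x. 8/5 < \<bar>x\<bar> \<Longrightarrow> \<phi> x = 0"
    using assms(2,3) by auto
  have [measurable]: "\<phi> \<in> borel_measurable borel"
    using assms(1) by (intro borel_measurable_continuous_onI smooth_real_continuous)
  define C :: real where "C = 2 * (2*pi) powr (-5) * (2*pi)^3
      * (2^17 + 2 * ((4 + 4 * (16/5)^3) + 2 * ((21/5)^(2*1000) * 2^1000 * (2*pi)^3)))"
  show thesis
  proof (rule that[of C])
    fix E S m k s :: real and F :: "R3 \<Rightarrow> complex" and \<xi> :: R3
    assume F: "F \<in> borel_measurable lborel" "0 \<le> E"
        "AE \<zeta> in lborel. (1 + norm \<zeta>)^10 * cmod (F \<zeta>) \<le> E"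
        "(\<integral>\<^sup>+\<zeta>. ennreal ((1 + (norm \<zeta>)^2)^1000 * (cmod (F \<zeta>))^2) \<partial>lborel) \<le> ennreal ((2*pi)^3 * E^2 * S)"
      and S: "0 \<le> S" "S \<le> 2 * 2 powr (m / 500)" and m: "0 \<le> m" "m / 300 \<le> k"
      and \<xi>: "2 powr k \<le> norm \<xi>"
    define q where "q = 2 powr (m / 80)"
    note scales = dyadic_scale_bounds[OF m \<xi>, folded q_def]
    have "S \<le> 2 * q"
      using S scales(2) by linarith
    have "cmod (I0 \<phi> F (\<lfloor>- 29 * m / 40\<rfloor> + 1) s \<xi>) \<le> C * E^3 * 2 powr (- 10 * k) / q^120"
      unfolding C_def
      by (rule norm_I0_le_scaled[OF \<phi> supp _ F S(1) \<open>S \<le> 2 * q\<close> scales(1,3-5)]) auto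
    also have "\<dots> = C * E^3 * 2 powr (- 3 * m / 2) * 2 powr (- 10 * k)"
      unfolding scales(6) by simp
    finally show "cmod (I0 \<phi> F (\<lfloor>- 29 * m / 40\<rfloor> + 1) s \<xi>) \<le> C * E^3 * 2 powr (- 3 * m / 2) * 2 powr (- 10 * k)" .
  qed
qed

theorem lemma5p2:
  fixes \<phi> :: "real \<Rightarrow> real"
  assumes "smooth_real \<phi>"
    and "\<forall>x. \<phi> (- x) = \<phi> x"
    and "\<forall>x. 0 \<le> \<phi> x \<and> \<phi> x \<le> 1"
    and "\<forall>x. \<bar>x\<bar> > 8/5 \<longrightarrow> \<phi> x = 0"
    and "\<forall>x. \<bar>x\<bar> \<le> 5/4 \<longrightarrow> \<phi> x = 1"
  shows "\<exists>C. \<forall>T \<epsilon>1 (u :: real \<Rightarrow> real^3 \<Rightarrow> complex) (f :: real \<Rightarrow> real^3 \<Rightarrow> complex).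
     T > 0 \<and> cont_H 1000 T u \<and> solves_hartree T u \<and>
     (\<forall>t\<in>{0..T}. L2fourier (f t) (\<lambda>\<xi>. cis (t * Lam_sym \<xi>) * hat (u t) \<xi>)) \<and>
     (\<forall>t\<in>{0..T}.
        (\<forall>i. in_H 2 (\<lambda>x. x$i * f t x)) \<and>
        (\<forall>i j. in_H 2 (\<lambda>x. x$i * x$j * f t x)) \<and>
        ereal ((1 + t) powr (- (1/1000)) * Hnorm 1000 (u t)
             + (1 + t) powr (- (1/1000)) * Hnorm_vec 2 UNIV (\<lambda>i x. x$i * f t x)
             + (1 + t) powr (- (2/1000)) * Hnorm_vec 2 UNIV (\<lambda>(i,j) x. x$i * x$j * f t x))
          + esssup lborel (\<lambda>\<xi>. ereal ((1 + norm \<xi>)^10 * cmod (hat (f t) \<xi>)))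
          \<le> ereal \<epsilon>1)
     \<longrightarrow> (\<forall>(m::nat) (k::int) s \<xi>.
           real_of_int k \<ge> real m / 300 \<and>
           s \<in> {2^m - 1 .. 2^m} \<and> s \<in> {0..T} \<and>
           2 powr k \<le> norm \<xi> \<and> norm \<xi> \<le> 2 powr (k+1)
           \<longrightarrow> cmod (I0 \<phi> (hat (f s)) (\<lfloor>- 29 * real m / 40\<rfloor> + 1) s \<xi>)
                 \<le> C * \<epsilon>1^3 * 2 powr (- 3 * real m / 2) * 2 powr (- 10 * real_of_int k))"
proof (rule I0_dyadic_bound[OF assms(1,3,4)], goal_cases)
  case (1 C)
  note C = 1
  show ?thesis
  proof (intro exI[of _ C] allI impI, goal_cases)
    case (1 T \<epsilon>1 u f m k s \<xi>)
    then have s: "s \<in> {0..T}" "0 \<le> s" "s \<le> 2^m"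
      by auto
    have "L2fourier (f s) (\<lambda>\<xi>. cis (s * Lam_sym \<xi>) * hat (u s) \<xi>)" "in_H 1000 (u s)"
      using 1 s(1) by (auto simp: cont_H_def)
    note slice = time_slice_bounds[OF this s(2), of \<epsilon>1]
    have "ereal ((1 + s) powr (- (1/1000)) * Hnorm 1000 (u s)
           + (1 + s) powr (- (1/1000)) * Hnorm_vec 2 UNIV (\<lambda>i x. x$i * f s x)
           + (1 + s) powr (- (2/1000)) * Hnorm_vec 2 UNIV (\<lambda>(i,j) x. x$i * x$j * f s x))
        + esssup lborel (\<lambda>\<xi>. ereal ((1 + norm \<xi>)^10 * cmod (hat (f s) \<xi>)))
        \<le> ereal \<epsilon>1"
      using 1 s(1) by blast
    note slice = slice[OF this]
    show ?case
      using 1 slice one_plus_powr_le_dyadic[OF s(2,3)]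
      by (intro C) auto
  qed
qed

end
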